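(* Let $N\ge 3$, $N=2g+1$ or $N=2g+2$ with $g\ge1$, and let $(v_n)$ be a solution of the $N$-periodic dressing chain with transition matrix $T(\lambda)=\begin{pmatrix}A&B\\C&D\end{pmatrix}$, $Q(\lambda)=\det T(\lambda)$, and $P(\lambda)=\operatorname{Tr}T(\lambda)$ written as $P(\lambda)=I_0\lambda^g+I_1\lambda^{g-1}+\cdots+I_g$ if $N=2g+1$ and $P(\lambda)=2\lambda^{g+1}+I_0\lambda^g+I_1\lambda^{g-1}+\cdots+I_g$ if $N=2g+2$. Assume the zeros $\lambda_1,\dots,\lambda_g$ of $B$ are pairwise distinct and $z_j=A(\lambda_j)\neq0$. Regard $\lambda_1,\dots,\lambda_g,z_1,\dots,z_g$ as independent variables and define $$H=\sum_{j=1}^g\frac{z_j+Q(\lambda_j)z_j^{-1}-I_0\lambda_j^g}{B'(\lambda_j)}\quad (N=2g+1),\qquad H=\sum_{j=1}^g\frac{z_j+Q(\lambda_j)z_j^{-1}-2\lambda_j^{g+1}-I_0\lambda_j^g}{B'(\lambda_j)}\quad (N=2g+2),$$ where $B'(\lambda_j)=b_0\prod_{k\ne j}(\lambda_j-\lambda_k)$ and $b_0,I_0$ are the given functions of $v$ (hence of $x$). Then $H=I_1/b_0$ when evaluated at the spectral Darboux coordinates, and the functions $\lambda_j(x),z_j(x)$ satisfy the (non-autonomous) Hamiltonian system $$\dot\lambda_j=z_j\frac{\partial H}{\partial z_j},\qquad \dot z_j=-z_j\frac{\partial H}{\partial\lambda_j}\qquad(j=1,\dots,g).$$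
   Context: Fix constants $\alpha_1,\dots,\alpha_N$, extended $N$-periodically; $\alpha=\sum_{n=1}^N\alpha_n$, $\beta_n=\alpha_1+\cdots+\alpha_n$, $\beta_0=0$. A solution of the $N$-periodic dressing chain is a family of functions $v_n(x)$, $v_{n+N}=v_n$, with $\dot v_n+\dot v_{n+1}=v_{n+1}^2-v_n^2+\alpha_n$ (dot $=d/dx$). Put $v=v_1+\cdots+v_N$ (so $\dot v=\alpha/2$). With $V_n(\lambda)=\begin{pmatrix}v_n&1\\ \lambda+v_n^2&v_n\end{pmatrix}$, the transition matrix is $T(\lambda)=V_N(\lambda+\beta_{N-1})\cdots V_2(\lambda+\beta_1)V_1(\lambda)$; $Q(\lambda)=(-1)^N\lambda\prod_{n=1}^{N-1}(\lambda+\beta_n)$. The polynomial $B$ has degree $g$ with leading coefficient $b_0=1$ if $N=2g+1$ and $b_0=v$ if $N=2g+2$; moreover $I_0=2v$ if $N=2g+1$ and $I_0=v^2+\sum_{n=1}^{2g+1}\beta_n$ if $N=2g+2$. The spectral Darboux coordinates are the zeros $\lambda_j$ of $B$ and $z_j=A(\lambda_j)$. *)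

theory Defs
  imports "HOL-Analysis.Analysis" "HOL-Computational_Algebra.Polynomial"
begin

text \<open>2x2 matrices of polynomials in lambda, as tuples (A, B, C, D)
  representing the matrix with rows (A B) and (C D).\<close>
type_synonym pmat2 = "complex poly \<times> complex poly \<times> complex poly \<times> complex poly"

fun pm_mult :: "pmat2 \<Rightarrow> pmat2 \<Rightarrow> pmat2" where
  "pm_mult (a, b, c, d) (a', b', c', d') =
     (a * a' + b * c', a * b' + b * d', c * a' + d * c', c * b' + d * d')"

definition pm_id :: pmat2 where "pm_id = (1, 0, 0, 1)"

definition beta :: "(nat \<Rightarrow> complex) \<Rightarrow> nat \<Rightarrow> complex" where
  "beta \<alpha> n = (\<Sum>k=1..n. \<alpha> k)"

text \<open>V_n(lambda + c) as a polynomial matrix in lambda, with v_n = w.\<close>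
definition Vmat :: "complex \<Rightarrow> complex \<Rightarrow> pmat2" where
  "Vmat w c = ([:w:], 1, [:c + w^2, 1:], [:w:])"

fun Tprod :: "(nat \<Rightarrow> complex) \<Rightarrow> (nat \<Rightarrow> real \<Rightarrow> complex) \<Rightarrow> real \<Rightarrow> nat \<Rightarrow> pmat2" where
  "Tprod \<alpha> v x 0 = pm_id"
| "Tprod \<alpha> v x (Suc n) = pm_mult (Vmat (v (Suc n) x) (beta \<alpha> n)) (Tprod \<alpha> v x n)"

definition Tmat :: "nat \<Rightarrow> (nat \<Rightarrow> complex) \<Rightarrow> (nat \<Rightarrow> real \<Rightarrow> complex) \<Rightarrow> real \<Rightarrow> pmat2" where
  "Tmat N \<alpha> v x = Tprod \<alpha> v x N"

definition Apol :: "nat \<Rightarrow> (nat \<Rightarrow> complex) \<Rightarrow> (nat \<Rightarrow> real \<Rightarrow> complex) \<Rightarrow> real \<Rightarrow> complex poly" where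
  "Apol N \<alpha> v x = (case Tmat N \<alpha> v x of (a, b, c, d) \<Rightarrow> a)"
definition Bpol :: "nat \<Rightarrow> (nat \<Rightarrow> complex) \<Rightarrow> (nat \<Rightarrow> real \<Rightarrow> complex) \<Rightarrow> real \<Rightarrow> complex poly" where
  "Bpol N \<alpha> v x = (case Tmat N \<alpha> v x of (a, b, c, d) \<Rightarrow> b)"
definition Ppol :: "nat \<Rightarrow> (nat \<Rightarrow> complex) \<Rightarrow> (nat \<Rightarrow> real \<Rightarrow> complex) \<Rightarrow> real \<Rightarrow> complex poly" where
  "Ppol N \<alpha> v x = (case Tmat N \<alpha> v x of (a, b, c, d) \<Rightarrow> a + d)"

definition Qfun :: "nat \<Rightarrow> (nat \<Rightarrow> complex) \<Rightarrow> complex \<Rightarrow> complex" where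
  "Qfun N \<alpha> l = (-1)^N * l * (\<Prod>n=1..N-1. (l + beta \<alpha> n))"

definition vsum :: "nat \<Rightarrow> (nat \<Rightarrow> real \<Rightarrow> complex) \<Rightarrow> real \<Rightarrow> complex" where
  "vsum N v x = (\<Sum>n=1..N. v n x)"

definition b0 :: "nat \<Rightarrow> (nat \<Rightarrow> real \<Rightarrow> complex) \<Rightarrow> real \<Rightarrow> complex" where
  "b0 N v x = (if odd N then 1 else vsum N v x)"

definition I0 :: "nat \<Rightarrow> nat \<Rightarrow> (nat \<Rightarrow> complex) \<Rightarrow> (nat \<Rightarrow> real \<Rightarrow> complex) \<Rightarrow> real \<Rightarrow> complex" where
  "I0 N g \<alpha> v x = (if odd N then 2 * vsum N v x
                    else (vsum N v x)^2 + (\<Sum>n=1..2*g+1. beta \<alpha> n))"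

definition I1 :: "nat \<Rightarrow> nat \<Rightarrow> (nat \<Rightarrow> complex) \<Rightarrow> (nat \<Rightarrow> real \<Rightarrow> complex) \<Rightarrow> real \<Rightarrow> complex" where
  "I1 N g \<alpha> v x = coeff (Ppol N \<alpha> v x) (g - 1)"

definition Ham :: "nat \<Rightarrow> nat \<Rightarrow> (nat \<Rightarrow> complex) \<Rightarrow> (nat \<Rightarrow> real \<Rightarrow> complex) \<Rightarrow> real
                   \<Rightarrow> (nat \<Rightarrow> complex) \<Rightarrow> (nat \<Rightarrow> complex) \<Rightarrow> complex" where
  "Ham N g \<alpha> v x L Z =
     (\<Sum>j=1..g. (Z j + Qfun N \<alpha> (L j) / Z j
                  - (if odd N then 0 else 2 * L j ^ (g + 1))
                  - I0 N g \<alpha> v x * L j ^ g)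
               / (b0 N v x * (\<Prod>k\<in>{1..g} - {j}. (L j - L k))))"

definition dHdz :: "nat \<Rightarrow> nat \<Rightarrow> (nat \<Rightarrow> complex) \<Rightarrow> (nat \<Rightarrow> real \<Rightarrow> complex) \<Rightarrow> real
                   \<Rightarrow> (nat \<Rightarrow> complex) \<Rightarrow> (nat \<Rightarrow> complex) \<Rightarrow> nat \<Rightarrow> complex" where
  "dHdz N g \<alpha> v x L Z j = deriv (\<lambda>w. Ham N g \<alpha> v x L (Z(j := w))) (Z j)"

definition dHdl :: "nat \<Rightarrow> nat \<Rightarrow> (nat \<Rightarrow> complex) \<Rightarrow> (nat \<Rightarrow> real \<Rightarrow> complex) \<Rightarrow> real
                   \<Rightarrow> (nat \<Rightarrow> complex) \<Rightarrow> (nat \<Rightarrow> complex) \<Rightarrow> nat \<Rightarrow> complex" where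
  "dHdl N g \<alpha> v x L Z j = deriv (\<lambda>w. Ham N g \<alpha> v x (L(j := w)) Z) (L j)"

end

theory Submission
  imports Defs
begin

(* The transfer matrix obeys a Lax-type equation. With U_n = [[0, 1], [lambda + r_n, 0]] and
   r_n = beta_n + v_(n+1)^2 - v_(n+1)', the dressing chain is exactly the zero-curvature condition
   V_(n+1)' = U_(n+1) V_(n+1) - V_(n+1) U_n, hence T' = U_N T - T U_0; in particular A' = C - (lambda + r_0) B
   and B' = D - A. Differentiating B(x, lambda_j(x)) = 0 and z_j(x) = A(x, lambda_j(x)) gives
   lambda_j' = (A - D)(lambda_j) / B'(lambda_j) and z_j' = C(lambda_j) + lambda_j' A'(lambda_j).

   On the other side, det T = Q gives D(lambda_j) = Q(lambda_j) / z_j, so the numerator of the j-th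
   summand of H is R(lambda_j), where R = P - 2 lambda^(g+1) - I_0 lambda^g has degree < g and
   coefficient I_1 at lambda^(g-1). As B'(lambda_j) = b_0 prod_(k <> j) (lambda_j - lambda_k), Lagrange
   interpolation gives H = I_1 / b_0. Moving lambda_j alone to w turns H into
   I_1 / b_0 + (z_j + Q(w) / z_j - P(w)) / (b_0 prod_(k <> j) (w - lambda_k)), whose numerator vanishes
   at w = lambda_j; differentiating det T = Q at lambda_j then turns both Hamilton equations into the
   two formulas above. *)

section \<open>The transfer matrix\<close>

definition pm_A :: "pmat2 \<Rightarrow> complex poly" where "pm_A T = fst T"
definition pm_B :: "pmat2 \<Rightarrow> complex poly" where "pm_B T = fst (snd T)"
definition pm_C :: "pmat2 \<Rightarrow> complex poly" where "pm_C T = fst (snd (snd T))"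
definition pm_D :: "pmat2 \<Rightarrow> complex poly" where "pm_D T = snd (snd (snd T))"

lemma pm_entries [simp]:
  "pm_A (a, b, c, d) = a" "pm_B (a, b, c, d) = b" "pm_C (a, b, c, d) = c" "pm_D (a, b, c, d) = d"
  by (simp_all add: pm_A_def pm_B_def pm_C_def pm_D_def)

lemma pm_entries_add [simp]:
  "pm_A (S + T) = pm_A S + pm_A T" "pm_B (S + T) = pm_B S + pm_B T"
  "pm_C (S + T) = pm_C S + pm_C T" "pm_D (S + T) = pm_D S + pm_D T"
  by (simp_all add: pm_A_def pm_B_def pm_C_def pm_D_def)

lemma pm_entries_diff [simp]:
  "pm_A (S - T) = pm_A S - pm_A T" "pm_B (S - T) = pm_B S - pm_B T"
  "pm_C (S - T) = pm_C S - pm_C T" "pm_D (S - T) = pm_D S - pm_D T"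
  by (simp_all add: pm_A_def pm_B_def pm_C_def pm_D_def)

lemma pm_mult_entries [simp]:
  "pm_A (pm_mult S T) = pm_A S * pm_A T + pm_B S * pm_C T"
  "pm_B (pm_mult S T) = pm_A S * pm_B T + pm_B S * pm_D T"
  "pm_C (pm_mult S T) = pm_C S * pm_A T + pm_D S * pm_C T"
  "pm_D (pm_mult S T) = pm_C S * pm_B T + pm_D S * pm_D T"
  by (cases S, cases T, simp)+

lemma pm_eqI:
  "pm_A S = pm_A T \<Longrightarrow> pm_B S = pm_B T \<Longrightarrow> pm_C S = pm_C T \<Longrightarrow> pm_D S = pm_D T \<Longrightarrow> S = T"
  by (cases S, cases T) simp

lemma pm_mult_assoc: "pm_mult (pm_mult R S) T = pm_mult R (pm_mult S T)"
  by (rule pm_eqI) (simp_all add: algebra_simps)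

lemma pm_mult_diff_distrib:
  "pm_mult R (S - T) = pm_mult R S - pm_mult R T"
  "pm_mult (S - T) R = pm_mult S R - pm_mult T R"
  by (rule pm_eqI; simp add: algebra_simps)+

lemma Vmat_entries [simp]:
  "pm_A (Vmat w c) = [:w:]" "pm_B (Vmat w c) = 1" "pm_C (Vmat w c) = [:c + w^2, 1:]" "pm_D (Vmat w c) = [:w:]"
  by (simp_all add: Vmat_def)

lemma pm_id_entries [simp]: "pm_A pm_id = 1" "pm_B pm_id = 0" "pm_C pm_id = 0" "pm_D pm_id = 1"
  by (simp_all add: pm_id_def)

lemma Apol_eq: "Apol N \<alpha> v t = pm_A (Tprod \<alpha> v t N)"
  by (cases "Tprod \<alpha> v t N") (simp add: Apol_def Tmat_def)

lemma Bpol_eq: "Bpol N \<alpha> v t = pm_B (Tprod \<alpha> v t N)"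
  by (cases "Tprod \<alpha> v t N") (simp add: Bpol_def Tmat_def)

lemma Ppol_eq: "Ppol N \<alpha> v t = pm_A (Tprod \<alpha> v t N) + pm_D (Tprod \<alpha> v t N)"
  by (cases "Tprod \<alpha> v t N") (simp add: Ppol_def Tmat_def)

lemma beta_0 [simp]: "beta \<alpha> 0 = 0"
  by (simp add: beta_def)

lemma beta_Suc: "beta \<alpha> (Suc n) = beta \<alpha> n + \<alpha> (Suc n)"
  by (simp add: beta_def)

lemma coeff_linear_mult:
  "coeff ([:a, 1:] * (p :: complex poly)) k = a * coeff p k + (if k = 0 then 0 else coeff p (k - 1))"
  by (cases k) (simp_all add: mult_pCons_left coeff_pCons)

lemma coeff_pCons_0: "coeff (pCons 0 p) k = (if k = 0 then 0 else coeff p (k - 1))"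
  by (cases k) simp_all

lemma degree_Tprod_entries:
  "degree (pm_A (Tprod \<alpha> v t n)) \<le> n \<and> degree (pm_B (Tprod \<alpha> v t n)) \<le> n \<and>
   degree (pm_C (Tprod \<alpha> v t n)) \<le> n \<and> degree (pm_D (Tprod \<alpha> v t n)) \<le> n"
proof (induction n)
  case (Suc n)
  then show ?case
    by (auto simp: mult_pCons_left intro!: degree_add_le order.trans[OF degree_smult_le]
        order.trans[OF degree_pCons_le])
qed simp

definition beta_sum :: "(nat \<Rightarrow> complex) \<Rightarrow> nat \<Rightarrow> complex" where
  "beta_sum \<alpha> n = (\<Sum>k=1..n-1. beta \<alpha> k)"

lemma beta_sum_Suc: "beta_sum \<alpha> (Suc n) = beta_sum \<alpha> n + beta \<alpha> n"
  by (cases n) (simp_all add: beta_sum_def)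

lemma vsum_Suc: "vsum (Suc n) v t = vsum n v t + v (Suc n) t"
  by (simp add: vsum_def)

definition even_shape :: "pmat2 \<Rightarrow> nat \<Rightarrow> complex \<Rightarrow> complex \<Rightarrow> bool" where
  "even_shape T m s b \<longleftrightarrow>
     (\<forall>k>m. coeff (pm_A T) k = 0) \<and> coeff (pm_A T) m = 1 \<and>
     (\<forall>k\<ge>m. coeff (pm_B T) k = 0) \<and> coeff (pCons 0 (pm_B T)) m = s \<and>
     (\<forall>k>m. coeff (pm_C T) k = 0) \<and> coeff (pm_C T) m = s \<and>
     (\<forall>k>m. coeff (pm_D T) k = 0) \<and> coeff (pm_D T) m = 1 \<and>
     coeff (pCons 0 (pm_A T)) m + coeff (pCons 0 (pm_D T)) m = s^2 + b"

definition odd_shape :: "pmat2 \<Rightarrow> nat \<Rightarrow> complex \<Rightarrow> complex \<Rightarrow> bool" where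
  "odd_shape T m s b \<longleftrightarrow>
     (\<forall>k>m. coeff (pm_A T) k = 0) \<and> coeff (pm_A T) m = s \<and>
     (\<forall>k>m. coeff (pm_B T) k = 0) \<and> coeff (pm_B T) m = 1 \<and>
     (\<forall>k>Suc m. coeff (pm_C T) k = 0) \<and> coeff (pm_C T) (Suc m) = 1 \<and>
     (\<forall>k>m. coeff (pm_D T) k = 0) \<and> coeff (pm_D T) m = s \<and>
     coeff (pm_C T) m + coeff (pCons 0 (pm_B T)) m = s^2 + b"

lemma Tprod_shape:
  "even_shape (Tprod \<alpha> v t (2*m)) m (vsum (2*m) v t) (beta_sum \<alpha> (2*m)) \<and>
   odd_shape (Tprod \<alpha> v t (Suc (2*m))) m (vsum (Suc (2*m)) v t) (beta_sum \<alpha> (Suc (2*m)))"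
proof -
  have odd_step: "odd_shape (Tprod \<alpha> v t (Suc n)) m (vsum (Suc n) v t) (beta_sum \<alpha> (Suc n))"
    if "even_shape (Tprod \<alpha> v t n) m (vsum n v t) (beta_sum \<alpha> n)" for n m
    using that unfolding even_shape_def odd_shape_def vsum_Suc beta_sum_Suc
    by (auto simp: coeff_pCons_0 coeff_linear_mult algebra_simps power2_eq_square)
  have even_step: "even_shape (Tprod \<alpha> v t (Suc n)) (Suc m) (vsum (Suc n) v t) (beta_sum \<alpha> (Suc n))"
    if "odd_shape (Tprod \<alpha> v t n) m (vsum n v t) (beta_sum \<alpha> n)" for n m
    using that unfolding even_shape_def odd_shape_def vsum_Suc beta_sum_Suc
    by (auto simp: coeff_pCons_0 coeff_linear_mult algebra_simps power2_eq_square)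
  show ?thesis
  proof (induction m)
    case 0
    have "even_shape (Tprod \<alpha> v t 0) 0 (vsum 0 v t) (beta_sum \<alpha> 0)"
      by (simp add: even_shape_def vsum_def beta_sum_def)
    then show ?case using odd_step by fastforce
  next
    case (Suc m)
    then have "even_shape (Tprod \<alpha> v t (2 * Suc m)) (Suc m) (vsum (2 * Suc m) v t) (beta_sum \<alpha> (2 * Suc m))"
      using even_step by fastforce
    then show ?case using odd_step by fastforce
  qed
qed

lemma Ppol_Bpol_top_coeffs_odd:
  assumes "N = 2*g + 1"
  shows "(\<forall>k>g. coeff (Ppol N \<alpha> v t) k = 0) \<and> coeff (Ppol N \<alpha> v t) g = 2 * vsum N v t
       \<and> (\<forall>k>g. coeff (Bpol N \<alpha> v t) k = 0) \<and> coeff (Bpol N \<alpha> v t) g = 1"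
  using Tprod_shape[of \<alpha> v t g] unfolding assms odd_shape_def Ppol_eq Bpol_eq by auto

lemma Ppol_Bpol_top_coeffs_even:
  assumes "N = 2*g + 2"
  shows "(\<forall>k>Suc g. coeff (Ppol N \<alpha> v t) k = 0) \<and> coeff (Ppol N \<alpha> v t) (Suc g) = 2
       \<and> coeff (Ppol N \<alpha> v t) g = (vsum N v t)^2 + beta_sum \<alpha> N
       \<and> (\<forall>k>g. coeff (Bpol N \<alpha> v t) k = 0) \<and> coeff (Bpol N \<alpha> v t) g = vsum N v t"
proof -
  have "N = 2 * Suc g" using assms by simp
  then show ?thesis
    using Tprod_shape[of \<alpha> v t "Suc g"] unfolding even_shape_def Ppol_eq Bpol_eq
    by (auto simp del: mult_Suc_right)
qed

definition Plow :: "nat \<Rightarrow> nat \<Rightarrow> (nat \<Rightarrow> complex) \<Rightarrow> (nat \<Rightarrow> real \<Rightarrow> complex) \<Rightarrow> real \<Rightarrow> complex poly" where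
  "Plow N g \<alpha> v x = Ppol N \<alpha> v x - (if odd N then 0 else monom 2 (Suc g)) - monom (I0 N g \<alpha> v x) g"

lemma poly_Plow:
  "poly (Plow N g \<alpha> v x) y
     = poly (Ppol N \<alpha> v x) y - (if odd N then 0 else 2 * y ^ (g + 1)) - I0 N g \<alpha> v x * y ^ g"
  by (simp add: Plow_def poly_monom)

lemma Plow_coeffs:
  assumes "g \<ge> 1" "N = 2*g + 1 \<or> N = 2*g + 2"
  shows "degree (Plow N g \<alpha> v x) < g" "coeff (Plow N g \<alpha> v x) (g - 1) = I1 N g \<alpha> v x"
proof -
  have "coeff (Plow N g \<alpha> v x) k = 0" if "k \<ge> g" for k
    using assms(2)
  proof
    assume N: "N = 2*g + 1"
    consider "k = g" | "k > g" using \<open>k \<ge> g\<close> by linarith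
    then show ?thesis
      using Ppol_Bpol_top_coeffs_odd[OF N, of \<alpha> v x] N by cases (auto simp: Plow_def I0_def coeff_monom)
  next
    assume N: "N = 2*g + 2"
    consider "k = g" | "k = Suc g" | "k > Suc g" using \<open>k \<ge> g\<close> by linarith
    then show ?thesis
      using Ppol_Bpol_top_coeffs_even[OF N, of \<alpha> v x] N
      by cases (auto simp: Plow_def I0_def coeff_monom beta_sum_def)
  qed
  then have "degree (Plow N g \<alpha> v x) \<le> g - 1"
    using assms(1) by (intro degree_le) auto
  then show "degree (Plow N g \<alpha> v x) < g"
    using assms(1) by linarith
  show "coeff (Plow N g \<alpha> v x) (g - 1) = I1 N g \<alpha> v x"
    using assms(1) by (auto simp: Plow_def I1_def coeff_monom)
qed

lemma Bpol_top_coeffs: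
  assumes "N = 2*g + 1 \<or> N = 2*g + 2"
  shows "degree (Bpol N \<alpha> v x) \<le> g" "coeff (Bpol N \<alpha> v x) g = b0 N v x"
  using Ppol_Bpol_top_coeffs_odd[of N g \<alpha> v x] Ppol_Bpol_top_coeffs_even[of N g \<alpha> v x] assms
  by (auto simp: b0_def intro: degree_le)

lemma det_Tprod:
  "pm_A (Tprod \<alpha> v t n) * pm_D (Tprod \<alpha> v t n) - pm_B (Tprod \<alpha> v t n) * pm_C (Tprod \<alpha> v t n)
     = (\<Prod>k<n. - [:beta \<alpha> k, 1:])"
proof (induction n)
  case (Suc n)
  let ?T = "Tprod \<alpha> v t n"
  have "pm_A (Tprod \<alpha> v t (Suc n)) * pm_D (Tprod \<alpha> v t (Suc n))
          - pm_B (Tprod \<alpha> v t (Suc n)) * pm_C (Tprod \<alpha> v t (Suc n))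
      = - [:beta \<alpha> n, 1:] * (pm_A ?T * pm_D ?T - pm_B ?T * pm_C ?T)"
    by (simp add: poly_eq_iff[symmetric] poly_eq_poly_eq_iff[symmetric] fun_eq_iff algebra_simps power2_eq_square)
  then show ?case using Suc by (simp add: mult.commute)
qed simp

lemma poly_det_Tprod:
  assumes "N \<ge> 1"
  shows "poly (pm_A (Tprod \<alpha> v t N) * pm_D (Tprod \<alpha> v t N) - pm_B (Tprod \<alpha> v t N) * pm_C (Tprod \<alpha> v t N)) y
     = Qfun N \<alpha> y"
proof -
  obtain M where N: "N = Suc M" using assms by (cases N) auto
  have "poly (\<Prod>k<N. - [:beta \<alpha> k, 1:]) y = (\<Prod>k<N. (-1) * (y + beta \<alpha> k))"
    by (simp add: poly_prod algebra_simps)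
  also have "\<dots> = (-1)^N * (y * (\<Prod>k<M. (y + beta \<alpha> (Suc k))))"
    unfolding prod.distrib N prod.lessThan_Suc_shift by simp
  also have "(\<Prod>k<M. (y + beta \<alpha> (Suc k))) = (\<Prod>n=1..N-1. (y + beta \<alpha> n))"
    unfolding N by (simp add: prod.atLeast1_atMost_eq)
  finally show ?thesis by (simp add: det_Tprod Qfun_def mult.assoc)
qed

section \<open>The Lax equation\<close>

definition has_poly_derivative :: "(real \<Rightarrow> complex poly) \<Rightarrow> complex poly \<Rightarrow> real \<Rightarrow> bool" where
  "has_poly_derivative F G x \<longleftrightarrow> (\<forall>k. ((\<lambda>t. coeff (F t) k) has_vector_derivative coeff G k) (at x))"

lemma has_poly_derivative_const: "has_poly_derivative (\<lambda>t. p) 0 x"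
  by (simp add: has_poly_derivative_def)

lemma has_poly_derivative_add:
  "has_poly_derivative F F' x \<Longrightarrow> has_poly_derivative G G' x \<Longrightarrow> H = F' + G'
    \<Longrightarrow> has_poly_derivative (\<lambda>t. F t + G t) H x"
  by (auto simp: has_poly_derivative_def intro!: derivative_eq_intros)

lemma has_poly_derivative_mult:
  assumes "has_poly_derivative F F' x" "has_poly_derivative G G' x" "H = F' * G x + F x * G'"
  shows "has_poly_derivative (\<lambda>t. F t * G t) H x"
  unfolding has_poly_derivative_def
proof
  fix k
  have "((\<lambda>t. \<Sum>i\<le>k. coeff (F t) i * coeff (G t) (k - i)) has_vector_derivative
          (\<Sum>i\<le>k. coeff (F x) i * coeff G' (k - i) + coeff F' i * coeff (G x) (k - i))) (at x)"
    using assms(1,2) unfolding has_poly_derivative_def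
    by (intro has_vector_derivative_sum has_vector_derivative_mult) auto
  then show "((\<lambda>t. coeff (F t * G t) k) has_vector_derivative coeff H k) (at x)"
    by (simp add: assms(3) coeff_mult sum.distrib add.commute)
qed

lemma has_poly_derivative_pCons:
  assumes "(f has_vector_derivative f') (at x)" "has_poly_derivative F F' x" "H = pCons f' F'"
  shows "has_poly_derivative (\<lambda>t. pCons (f t) (F t)) H x"
  unfolding has_poly_derivative_def
proof
  fix k
  show "((\<lambda>t. coeff (pCons (f t) (F t)) k) has_vector_derivative coeff H k) (at x)"
    using assms unfolding has_poly_derivative_def by (cases k) simp_all
qed

definition has_pm_derivative :: "(real \<Rightarrow> pmat2) \<Rightarrow> pmat2 \<Rightarrow> real \<Rightarrow> bool" where
  "has_pm_derivative F G x \<longleftrightarrow>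
     has_poly_derivative (\<lambda>t. pm_A (F t)) (pm_A G) x \<and> has_poly_derivative (\<lambda>t. pm_B (F t)) (pm_B G) x \<and>
     has_poly_derivative (\<lambda>t. pm_C (F t)) (pm_C G) x \<and> has_poly_derivative (\<lambda>t. pm_D (F t)) (pm_D G) x"

lemma has_pm_derivative_mult:
  assumes "has_pm_derivative S S' x" "has_pm_derivative T T' x"
  shows "has_pm_derivative (\<lambda>t. pm_mult (S t) (T t)) (pm_mult S' (T x) + pm_mult (S x) T') x"
  using assms unfolding has_pm_derivative_def
  by (auto intro!: has_poly_derivative_add has_poly_derivative_mult simp: algebra_simps)

definition Umat :: "complex \<Rightarrow> pmat2" where
  "Umat r = (0, 1, [:r, 1:], 0)"

definition Ucoef :: "(nat \<Rightarrow> complex) \<Rightarrow> (nat \<Rightarrow> real \<Rightarrow> complex) \<Rightarrow> (nat \<Rightarrow> real \<Rightarrow> complex) \<Rightarrow> real \<Rightarrow> nat \<Rightarrow> complex" where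
  "Ucoef \<alpha> v v' x n = beta \<alpha> n + (v (Suc n) x)^2 - v' (Suc n) x"

lemma Umat_entries [simp]:
  "pm_A (Umat r) = 0" "pm_B (Umat r) = 1" "pm_C (Umat r) = [:r, 1:]" "pm_D (Umat r) = 0"
  by (simp_all add: Umat_def)

lemma has_pm_derivative_Vmat:
  assumes "(w has_vector_derivative w') (at x)"
  shows "has_pm_derivative (\<lambda>t. Vmat (w t) c) ([:w':], 0, [:2 * w x * w':], [:w':]) x"
proof -
  have "((\<lambda>t. c + (w t)^2) has_vector_derivative 2 * w x * w') (at x)"
    using assms by (auto intro!: derivative_eq_intros simp: power2_eq_square)
  then show ?thesis
    using assms unfolding has_pm_derivative_def Vmat_entries
    by (auto intro!: has_poly_derivative_pCons has_poly_derivative_const)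
qed

lemma Vmat_zero_curvature:
  assumes "v' (Suc n) x + v' (Suc (Suc n)) x = (v (Suc (Suc n)) x)^2 - (v (Suc n) x)^2 + \<alpha> (Suc n)"
  shows "([:v' (Suc n) x:], 0, [:2 * v (Suc n) x * v' (Suc n) x:], [:v' (Suc n) x:])
       = pm_mult (Umat (Ucoef \<alpha> v v' x (Suc n))) (Vmat (v (Suc n) x) (beta \<alpha> n))
         - pm_mult (Vmat (v (Suc n) x) (beta \<alpha> n)) (Umat (Ucoef \<alpha> v v' x n))"
proof -
  have "Ucoef \<alpha> v v' x (Suc n) = beta \<alpha> n + (v (Suc n) x)^2 + v' (Suc n) x"
    using assms by (simp add: Ucoef_def beta_Suc algebra_simps)
  then show ?thesis
    by (intro pm_eqI) (simp_all add: Ucoef_def mult_pCons_left algebra_simps)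
qed

lemma Tprod_lax:
  assumes "\<And>n. (v n has_vector_derivative v' n x) (at x)"
    and "\<And>n. v' n x + v' (Suc n) x = (v (Suc n) x)^2 - (v n x)^2 + \<alpha> n"
  shows "has_pm_derivative (\<lambda>t. Tprod \<alpha> v t n)
           (pm_mult (Umat (Ucoef \<alpha> v v' x n)) (Tprod \<alpha> v x n)
            - pm_mult (Tprod \<alpha> v x n) (Umat (Ucoef \<alpha> v v' x 0))) x"
proof (induction n)
  case 0
  show ?case
    by (simp add: has_pm_derivative_def has_poly_derivative_const)
next
  case (Suc n)
  let ?V = "Vmat (v (Suc n) x) (beta \<alpha> n)" and ?T = "Tprod \<alpha> v x n"
    and ?U = "\<lambda>k. Umat (Ucoef \<alpha> v v' x k)"
  have "has_pm_derivative (\<lambda>t. Tprod \<alpha> v t (Suc n))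
     (pm_mult (pm_mult (?U (Suc n)) ?V - pm_mult ?V (?U n)) ?T
      + pm_mult ?V (pm_mult (?U n) ?T - pm_mult ?T (?U 0))) x"
    using has_pm_derivative_mult[OF has_pm_derivative_Vmat[OF assms(1)[of "Suc n"]] Suc]
    unfolding Vmat_zero_curvature[where v = v and v' = v' and \<alpha> = \<alpha> and n = n and x = x, OF assms(2)] by simp
  then show ?case
    by (simp add: pm_mult_diff_distrib pm_mult_assoc)
qed

section \<open>Moving roots of moving polynomials\<close>

lemma has_vector_derivative_iff_difference_quotient:
  fixes f :: "real \<Rightarrow> complex"
  shows "(f has_vector_derivative D) (at x) \<longleftrightarrow> ((\<lambda>y. (f y - f x) / of_real (y - x)) \<longlongrightarrow> D) (at x)"
proof -
  have "norm ((f y - f x) - (y - x) *\<^sub>R D) / norm (y - x) = norm ((f y - f x) / of_real (y - x) - D)"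
    if "y \<noteq> x" for y
  proof -
    have "(f y - f x) - (y - x) *\<^sub>R D = of_real (y - x) * ((f y - f x) / of_real (y - x) - D)"
      using that by (simp add: scaleR_conv_of_real field_simps)
    then have "norm ((f y - f x) - (y - x) *\<^sub>R D) = norm (y - x) * norm ((f y - f x) / of_real (y - x) - D)"
      by (simp only: norm_mult norm_of_real real_norm_def)
    then show ?thesis
      using that by simp
  qed
  then have eq: "\<forall>\<^sub>F y in at x. norm ((f y - f x) - (y - x) *\<^sub>R D) / norm (y - x)
                                = norm ((f y - f x) / of_real (y - x) - D)"
    by (simp add: eventually_at_filter)
  have "(f has_vector_derivative D) (at x) \<longleftrightarrow>
      ((\<lambda>y. norm ((f y - f x) - (y - x) *\<^sub>R D) / norm (y - x)) \<longlongrightarrow> 0) (at x)"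
    unfolding has_vector_derivative_def has_derivative_iff_norm
    by (simp add: bounded_linear_scaleR_left)
  also have "\<dots> \<longleftrightarrow> ((\<lambda>y. norm ((f y - f x) / of_real (y - x) - D)) \<longlongrightarrow> 0) (at x)"
    by (rule tendsto_cong[OF eq])
  also have "\<dots> \<longleftrightarrow> ((\<lambda>y. (f y - f x) / of_real (y - x)) \<longlongrightarrow> D) (at x)"
    by (simp add: tendsto_norm_zero_iff LIM_zero_iff)
  finally show ?thesis .
qed

lemma has_vector_derivative_mult_vanishing:
  fixes h m :: "real \<Rightarrow> complex"
  assumes "h x = 0" "(h has_vector_derivative h') (at x)" "isCont m x"
  shows "((\<lambda>t. h t * m t) has_vector_derivative h' * m x) (at x)"
proof -
  have "((\<lambda>y. (h y - h x) / of_real (y - x) * m y) \<longlongrightarrow> h' * m x) (at x)"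
    using assms(2,3) unfolding has_vector_derivative_iff_difference_quotient isCont_def
    by (intro tendsto_mult)
  then show ?thesis
    unfolding has_vector_derivative_iff_difference_quotient using assms(1) by (simp add: algebra_simps)
qed

lemma poly_eq_sum_coeffs:
  fixes p :: "complex poly"
  assumes "degree p \<le> K"
  shows "poly p y = (\<Sum>i\<le>K. coeff p i * y ^ i)"
proof -
  have "(\<Sum>i\<le>K. coeff p i * y ^ i) = (\<Sum>i\<le>degree p. coeff p i * y ^ i)"
    using assms by (intro sum.mono_neutral_right) (auto simp: coeff_eq_0)
  then show ?thesis by (simp add: poly_altdef)
qed

lemma has_poly_derivative_degree_le:
  assumes "has_poly_derivative F G x" "\<forall>t. degree (F t) \<le> K"
  shows "degree G \<le> K"
proof (rule degree_le, intro allI impI)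
  fix k assume "K < k"
  then have "(\<lambda>t. coeff (F t) k) = (\<lambda>t. 0)"
    using assms(2) by (meson coeff_eq_0 le_less_trans)
  moreover have "((\<lambda>t. coeff (F t) k) has_vector_derivative coeff G k) (at x)"
    using assms(1) by (simp add: has_poly_derivative_def)
  ultimately have "((\<lambda>t. 0) has_vector_derivative coeff G k) (at x)"
    by simp
  then show "coeff G k = 0"
    by (rule vector_derivative_unique_at[OF _ has_vector_derivative_const])
qed

lemma poly_family_diff_has_vector_derivative:
  assumes F: "has_poly_derivative F G x" "\<forall>t. degree (F t) \<le> K" and \<mu>: "isCont \<mu> x"
  shows "((\<lambda>t. poly (F t) (\<mu> t) - poly (F x) (\<mu> t)) has_vector_derivative poly G (\<mu> x)) (at x)"
proof -
  have "degree G \<le> K" by (rule has_poly_derivative_degree_le[OF F])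
  then have G: "poly G (\<mu> x) = (\<Sum>i\<le>K. coeff G i * \<mu> x ^ i)"
    by (rule poly_eq_sum_coeffs)
  have eq: "poly (F t) (\<mu> t) - poly (F x) (\<mu> t) = (\<Sum>i\<le>K. (coeff (F t) i - coeff (F x) i) * \<mu> t ^ i)" for t
    using F(2) by (simp add: poly_eq_sum_coeffs[of _ K] sum_subtractf[symmetric] algebra_simps)
  have "((\<lambda>t. \<Sum>i\<le>K. (coeff (F t) i - coeff (F x) i) * \<mu> t ^ i) has_vector_derivative
          (\<Sum>i\<le>K. coeff G i * \<mu> x ^ i)) (at x)"
  proof (rule has_vector_derivative_sum)
    fix i
    have "((\<lambda>t. coeff (F t) i - coeff (F x) i) has_vector_derivative coeff G i) (at x)"
      using has_vector_derivative_diff[OF F(1)[unfolded has_poly_derivative_def, rule_format, of i]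
          has_vector_derivative_const[of "coeff (F x) i"]] by simp
    from this continuous_power[OF \<mu>, of i]
    show "((\<lambda>t. (coeff (F t) i - coeff (F x) i) * \<mu> t ^ i) has_vector_derivative coeff G i * \<mu> x ^ i) (at x)"
      by (rule has_vector_derivative_mult_vanishing[rotated]) simp
  qed
  then show ?thesis unfolding eq G .
qed

lemma poly_family_has_vector_derivative:
  assumes F: "has_poly_derivative F G x" "\<forall>t. degree (F t) \<le> K"
    and \<mu>: "(\<mu> has_vector_derivative \<mu>') (at x)"
  shows "((\<lambda>t. poly (F t) (\<mu> t)) has_vector_derivative poly G (\<mu> x) + \<mu>' * poly (pderiv (F x)) (\<mu> x)) (at x)"
proof -
  have "((\<lambda>t. poly (F x) (\<mu> t)) has_vector_derivative \<mu>' * poly (pderiv (F x)) (\<mu> x)) (at x)"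
    using field_vector_diff_chain_at[OF \<mu> poly_DERIV] by (simp add: o_def)
  moreover have "isCont \<mu> x"
    using \<mu> by (rule has_vector_derivative_continuous)
  ultimately have "((\<lambda>t. (poly (F t) (\<mu> t) - poly (F x) (\<mu> t)) + poly (F x) (\<mu> t))
      has_vector_derivative poly G (\<mu> x) + \<mu>' * poly (pderiv (F x)) (\<mu> x)) (at x)"
    by (intro has_vector_derivative_add poly_family_diff_has_vector_derivative[OF F])
  then show ?thesis by (simp only: diff_add_cancel)
qed

lemma simple_root_has_vector_derivative:
  assumes F: "has_poly_derivative F G x" "\<forall>t. degree (F t) \<le> K"
    and \<mu>: "isCont \<mu> x" "\<forall>\<^sub>F t in at x. poly (F t) (\<mu> t) = 0" "poly (F x) (\<mu> x) = 0"
    and simple: "poly (pderiv (F x)) (\<mu> x) \<noteq> 0"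
  shows "(\<mu> has_vector_derivative - poly G (\<mu> x) / poly (pderiv (F x)) (\<mu> x)) (at x)"
proof -
  define q where "q = synthetic_div (F x) (\<mu> x)"
  define h where "h t = poly (F t) (\<mu> t) - poly (F x) (\<mu> t)" for t
  have Fx: "F x = [:- \<mu> x, 1:] * q"
    using synthetic_div_correct'[of "\<mu> x" "F x"] \<mu>(3) by (simp add: q_def)
  have q: "poly q (\<mu> x) = poly (pderiv (F x)) (\<mu> x)"
    unfolding Fx pderiv_mult by (simp add: pderiv_pCons)
  have cont_q: "isCont (\<lambda>t. poly q (\<mu> t)) x"
    using \<mu>(1) by (rule continuous_poly)
  then have "\<forall>\<^sub>F t in at x. poly q (\<mu> t) \<noteq> 0"
    using simple q by (simp add: isCont_def tendsto_imp_eventually_ne)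
  with \<mu>(2) have ev: "\<forall>\<^sub>F t in at x. h t * (- 1 / poly q (\<mu> t)) = \<mu> t - \<mu> x"
  proof eventually_elim
    case (elim t)
    then have "h t = - ((\<mu> t - \<mu> x) * poly q (\<mu> t))"
      by (simp add: h_def Fx left_diff_distrib)
    with elim(2) show ?case by simp
  qed
  have "((\<lambda>t. h t * (- 1 / poly q (\<mu> t))) has_vector_derivative
                   poly G (\<mu> x) * (- 1 / poly q (\<mu> x))) (at x)"
  proof (rule has_vector_derivative_mult_vanishing)
    show "h x = 0" by (simp add: h_def)
    show "(h has_vector_derivative poly G (\<mu> x)) (at x)"
      unfolding h_def by (rule poly_family_diff_has_vector_derivative[OF F \<mu>(1)])
    show "isCont (\<lambda>t. - 1 / poly q (\<mu> t)) x"
      using cont_q simple q by (intro isCont_divide continuous_const) auto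
  qed
  then have "((\<lambda>t. \<mu> t - \<mu> x) has_vector_derivative poly G (\<mu> x) * (- 1 / poly q (\<mu> x))) (at x)"
    unfolding has_vector_derivative_def
    by (rule has_derivative_transform_eventually[OF _ ev]) (simp_all add: h_def)
  from has_vector_derivative_add[OF this has_vector_derivative_const[of "\<mu> x"]]
  have "((\<lambda>t. \<mu> t - \<mu> x + \<mu> x) has_vector_derivative poly G (\<mu> x) * (- 1 / poly q (\<mu> x))) (at x)"
    by (simp only: add_0_right)
  moreover have "poly G (\<mu> x) * (- 1 / poly q (\<mu> x)) = - poly G (\<mu> x) / poly (pderiv (F x)) (\<mu> x)"
    using q by simp
  ultimately show ?thesis
    by (simp only: diff_add_cancel)
qed

lemma DERIV_divide_vanishing:
  assumes "(f has_field_derivative D) (at a)" "(g has_field_derivative E) (at a)" "f a = 0" "g a \<noteq> 0"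
  shows "((\<lambda>w. f w / g w) has_field_derivative D / g a) (at a)"
  using DERIV_divide[OF assms(1,2,4)] assms(3,4) by (simp add: power2_eq_square)

section \<open>Lagrange interpolation\<close>

lemma prod_diff_nonzero:
  fixes L :: "'a \<Rightarrow> complex"
  assumes "finite S" "inj_on L S" "j \<in> S"
  shows "(\<Prod>k\<in>S-{j}. (L j - L k)) \<noteq> 0"
proof -
  have "L j - L k \<noteq> 0" if "k \<in> S - {j}" for k
    using assms(2,3) that by (auto simp: inj_on_eq_iff)
  then show ?thesis
    using assms(1) by (simp add: prod_zero_iff)
qed

lemma
  fixes L :: "'a \<Rightarrow> complex"
  assumes "finite S"
  shows degree_prod_linear: "degree (\<Prod>k\<in>S. [:- L k, 1:]) = card S"
    and coeff_prod_linear_card: "coeff (\<Prod>k\<in>S. [:- L k, 1:]) (card S) = 1"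
proof -
  show deg: "degree (\<Prod>k\<in>S. [:- L k, 1:]) = card S"
    using assms by (simp add: degree_prod_eq_sum_degree)
  show "coeff (\<Prod>k\<in>S. [:- L k, 1:]) (card S) = 1"
    using lead_coeff_prod[of "\<lambda>k. [:- L k, 1:]" S] unfolding deg by simp
qed

lemma poly_eq_smult_prod_roots:
  fixes B :: "complex poly"
  assumes "finite S" "degree B \<le> card S" "coeff B (card S) = b" "inj_on L S"
    and "\<forall>j\<in>S. poly B (L j) = 0"
  shows "B = smult b (\<Prod>k\<in>S. [:- L k, 1:])"
  by (rule poly_eqI_degree_lead_coeff[where A = "L ` S" and n = "card S"])
    (use assms in \<open>auto simp: card_image degree_prod_linear coeff_prod_linear_card poly_prod\<close>)

lemma lagrange_sum_eq_coeff:
  fixes R :: "complex poly"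
  assumes "finite S" "inj_on L S" "degree R < card S"
  shows "(\<Sum>j\<in>S. poly R (L j) / (\<Prod>k\<in>S-{j}. (L j - L k))) = coeff R (card S - 1)"
proof -
  define d where "d j = (\<Prod>k\<in>S-{j}. (L j - L k))" for j
  define lb where "lb j = (\<Prod>k\<in>S-{j}. [:- L k, 1:])" for j
  define I where "I = (\<Sum>j\<in>S. smult (poly R (L j) / d j) (lb j))"
  have card: "card (S - {j}) = card S - 1" if "j \<in> S" for j
    using assms(1) that by simp
  have lc_lb: "coeff (lb j) (card S - 1) = 1" if "j \<in> S" for j
    using coeff_prod_linear_card[of "S - {j}" L] assms(1) card[OF that] by (simp add: lb_def)
  have poly_lb: "poly (lb j) (L i) = (if i = j then d j else 0)" if "i \<in> S" "j \<in> S" for i j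
    using that assms(1) by (auto simp: lb_def d_def poly_prod intro: prod_zero)
  have "R = I"
  proof (rule poly_eqI_degree[where A = "L ` S"])
    fix y assume "y \<in> L ` S"
    then obtain i where i: "i \<in> S" "y = L i" by blast
    have "poly I (L i) = (\<Sum>j\<in>S. if j = i then poly R (L i) else 0)"
      unfolding I_def poly_sum
      by (intro sum.cong) (use i poly_lb prod_diff_nonzero[OF assms(1,2)] in \<open>auto simp: d_def\<close>)
    then show "poly R y = poly I y"
      using i assms(1) by simp
  next
    have "degree (lb j) < card S" if "j \<in> S" for j
      using assms(1,3) that card[OF that] by (simp add: lb_def degree_prod_linear)
    then show "degree I < card (L ` S)"
      unfolding I_def card_image[OF assms(2)] using assms(3)
      by (intro degree_sum_less) (auto intro: le_less_trans[OF degree_smult_le])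
  qed (use assms in \<open>simp add: card_image\<close>)
  then have "coeff R (card S - 1) = coeff I (card S - 1)"
    by simp
  also have "\<dots> = (\<Sum>j\<in>S. poly R (L j) / d j * coeff (lb j) (card S - 1))"
    by (simp add: I_def coeff_sum)
  also have "\<dots> = (\<Sum>j\<in>S. poly R (L j) / d j)"
    using lc_lb by (intro sum.cong) auto
  finally show ?thesis by (simp add: d_def)
qed

section \<open>The Hamiltonian at spectral Darboux coordinates\<close>

(* For z nonzero it vanishes iff z^2 - P(y) z + Q(y) = 0, i.e. iff (y, z) lies on the spectral
   curve det (T(y) - z) = 0. *)
definition spectral_defect :: "nat \<Rightarrow> (nat \<Rightarrow> complex) \<Rightarrow> (nat \<Rightarrow> real \<Rightarrow> complex) \<Rightarrow> real \<Rightarrow> complex \<Rightarrow> complex \<Rightarrow> complex" where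
  "spectral_defect N \<alpha> v x z y = z + Qfun N \<alpha> y / z - poly (Ppol N \<alpha> v x) y"

lemma Ham_eq_sum_Plow_defect:
  "Ham N g \<alpha> v x L Z =
     (\<Sum>i\<in>{1..g}. (poly (Plow N g \<alpha> v x) (L i) + spectral_defect N \<alpha> v x (Z i) (L i))
                  / (b0 N v x * (\<Prod>k\<in>{1..g}-{i}. (L i - L k))))"
  unfolding Ham_def by (intro sum.cong) (simp_all add: poly_Plow spectral_defect_def)

lemma dHdz_eq:
  assumes "j \<in> {1..g}" "Z j \<noteq> 0"
  shows "dHdz N g \<alpha> v x L Z j = (1 - Qfun N \<alpha> (L j) / (Z j)^2) / (b0 N v x * (\<Prod>k\<in>{1..g}-{j}. (L j - L k)))"
proof -
  define den where "den = b0 N v x * (\<Prod>k\<in>{1..g}-{j}. (L j - L k))"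
  define e where "e = (if odd N then 0 else 2 * L j ^ (g + 1)) + I0 N g \<alpha> v x * L j ^ g"
  define c where "c = (\<Sum>i\<in>{1..g}-{j}. (Z i + Qfun N \<alpha> (L i) / Z i
                  - (if odd N then 0 else 2 * L i ^ (g + 1)) - I0 N g \<alpha> v x * L i ^ g)
               / (b0 N v x * (\<Prod>k\<in>{1..g} - {i}. (L i - L k))))"
  have Ham_z: "Ham N g \<alpha> v x L (Z(j := w)) = c + (w + Qfun N \<alpha> (L j) / w - e) / den" for w
    unfolding Ham_def c_def e_def den_def
    by (subst sum.remove[OF finite_atLeastAtMost assms(1)]) (auto intro!: sum.cong simp: diff_diff_eq)
  have "((\<lambda>w. w + Qfun N \<alpha> (L j) / w - e) has_field_derivative
                    1 - Qfun N \<alpha> (L j) / (Z j)^2) (at (Z j))"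
    using assms(2) by (auto intro!: derivative_eq_intros simp: power2_eq_square field_simps)
  then have "((\<lambda>w. c + (w + Qfun N \<alpha> (L j) / w - e) / den) has_field_derivative
                    0 + (1 - Qfun N \<alpha> (L j) / (Z j)^2) / den) (at (Z j))"
    by (intro DERIV_add DERIV_const DERIV_cdivide)
  then show ?thesis
    unfolding dHdz_def den_def Ham_z by (simp add: DERIV_imp_deriv)
qed

lemma spectral_defect_has_derivative:
  fixes \<alpha> v x
  assumes "N \<ge> 1" "z \<noteq> 0"
  defines "T \<equiv> Tprod \<alpha> v x N"
  shows "(spectral_defect N \<alpha> v x z has_field_derivative
            poly (pderiv (pm_A T * pm_D T - pm_B T * pm_C T)) y / z - poly (pderiv (Ppol N \<alpha> v x)) y) (at y)"
proof -
  define Qp where "Qp = pm_A T * pm_D T - pm_B T * pm_C T"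
  have "spectral_defect N \<alpha> v x z = (\<lambda>y. z + poly Qp y / z - poly (Ppol N \<alpha> v x) y)"
    using poly_det_Tprod[OF assms(1)] by (simp add: spectral_defect_def T_def Qp_def fun_eq_iff)
  then show ?thesis
    unfolding Qp_def[symmetric] using assms(2)
    by (auto intro!: derivative_eq_intros simp: field_simps)
qed

locale darboux_point =
  fixes N g :: nat and \<alpha> :: "nat \<Rightarrow> complex" and v :: "nat \<Rightarrow> real \<Rightarrow> complex"
    and x :: real and L :: "nat \<Rightarrow> complex"
  assumes g_pos: "g \<ge> 1"
    and N_cases: "N = 2*g + 1 \<or> N = 2*g + 2"
    and B_nonzero: "Bpol N \<alpha> v x \<noteq> 0"
    and L_inj: "inj_on L {1..g}"
    and B_roots: "\<forall>j\<in>{1..g}. poly (Bpol N \<alpha> v x) (L j) = 0"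
    and A_roots_nonzero: "\<forall>j\<in>{1..g}. poly (Apol N \<alpha> v x) (L j) \<noteq> 0"
begin

abbreviation "T \<equiv> Tprod \<alpha> v x N"
abbreviation "Z j \<equiv> poly (pm_A T) (L j)"
abbreviation "den j \<equiv> b0 N v x * (\<Prod>k\<in>{1..g}-{j}. (L j - L k))"

lemma B_factor: "pm_B T = smult (b0 N v x) (\<Prod>k\<in>{1..g}. [:- L k, 1:])"
  using poly_eq_smult_prod_roots[of "{1..g}" "Bpol N \<alpha> v x" "b0 N v x" L]
    Bpol_top_coeffs[OF N_cases] L_inj B_roots
  by (simp add: Bpol_eq)

lemma den_nonzero: "j \<in> {1..g} \<Longrightarrow> den j \<noteq> 0"
  using B_nonzero B_factor prod_diff_nonzero[OF _ L_inj] by (auto simp: Bpol_eq)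

lemma pderiv_B_root:
  assumes "j \<in> {1..g}"
  shows "poly (pderiv (pm_B T)) (L j) = den j"
proof -
  have split: "(\<Prod>k\<in>{1..g}. [:- L k, 1:]) = [:- L j, 1:] * (\<Prod>k\<in>{1..g}-{j}. [:- L k, 1:])"
    using assms by (simp add: prod.remove)
  show ?thesis
    unfolding B_factor split pderiv_smult pderiv_mult by (simp add: pderiv_pCons poly_prod)
qed

lemma B_root: "j \<in> {1..g} \<Longrightarrow> poly (pm_B T) (L j) = 0"
  using B_roots by (simp add: Bpol_eq)

lemma Z_nonzero: "j \<in> {1..g} \<Longrightarrow> Z j \<noteq> 0"
  using A_roots_nonzero by (simp add: Apol_eq)

lemma D_root:
  assumes "j \<in> {1..g}"
  shows "poly (pm_D T) (L j) = Qfun N \<alpha> (L j) / Z j"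
proof -
  have "Z j * poly (pm_D T) (L j) = Qfun N \<alpha> (L j)"
    using poly_det_Tprod[of N \<alpha> v x "L j"] N_cases B_root[OF assms] by auto
  then show ?thesis
    using Z_nonzero[OF assms] by (simp add: field_simps)
qed

lemma spectral_defect_root: "j \<in> {1..g} \<Longrightarrow> spectral_defect N \<alpha> v x (Z j) (L j) = 0"
  by (simp add: spectral_defect_def D_root Ppol_eq)

lemma Ham_eq_I1: "Ham N g \<alpha> v x L Z = I1 N g \<alpha> v x / b0 N v x"
proof -
  have "Ham N g \<alpha> v x L Z
      = (\<Sum>i\<in>{1..g}. poly (Plow N g \<alpha> v x) (L i) / (\<Prod>k\<in>{1..g}-{i}. (L i - L k))) / b0 N v x"
    unfolding Ham_eq_sum_Plow_defect sum_divide_distrib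
    by (intro sum.cong) (simp_all add: spectral_defect_root)
  also have "\<dots> = I1 N g \<alpha> v x / b0 N v x"
    using lagrange_sum_eq_coeff[of "{1..g}" L "Plow N g \<alpha> v x"] L_inj Plow_coeffs[OF g_pos N_cases]
    by simp
  finally show ?thesis .
qed

lemma Ham_move_root:
  assumes j: "j \<in> {1..g}" and w: "w \<notin> L ` ({1..g} - {j})"
  shows "Ham N g \<alpha> v x (L(j := w)) Z
       = I1 N g \<alpha> v x / b0 N v x
         + spectral_defect N \<alpha> v x (Z j) w / (b0 N v x * (\<Prod>k\<in>{1..g}-{j}. (w - L k)))"
proof -
  let ?L = "L(j := w)"
  let ?den = "\<lambda>i. b0 N v x * (\<Prod>k\<in>{1..g}-{i}. (?L i - ?L k))"
  have inj: "inj_on ?L {1..g}"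
  proof (rule inj_onI)
    fix a b assume "a \<in> {1..g}" "b \<in> {1..g}" "?L a = ?L b"
    then show "a = b"
      using L_inj w by (cases "a = j"; cases "b = j") (auto simp: inj_on_eq_iff)
  qed
  have "(\<Sum>i\<in>{1..g}. spectral_defect N \<alpha> v x (Z i) (?L i) / ?den i)
      = (\<Sum>i\<in>{1..g}. if i = j then spectral_defect N \<alpha> v x (Z j) w / ?den j else 0)"
    by (intro sum.cong) (simp_all add: spectral_defect_root)
  also have "\<dots> = spectral_defect N \<alpha> v x (Z j) w / (b0 N v x * (\<Prod>k\<in>{1..g}-{j}. (w - L k)))"
    using j by simp
  finally have defects: "(\<Sum>i\<in>{1..g}. spectral_defect N \<alpha> v x (Z i) (?L i) / ?den i)
      = spectral_defect N \<alpha> v x (Z j) w / (b0 N v x * (\<Prod>k\<in>{1..g}-{j}. (w - L k)))" .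
  have "(\<Sum>i\<in>{1..g}. poly (Plow N g \<alpha> v x) (?L i) / ?den i)
      = (\<Sum>i\<in>{1..g}. poly (Plow N g \<alpha> v x) (?L i) / (\<Prod>k\<in>{1..g}-{i}. (?L i - ?L k))) / b0 N v x"
    by (simp add: sum_divide_distrib mult.commute)
  also have "\<dots> = I1 N g \<alpha> v x / b0 N v x"
    using lagrange_sum_eq_coeff[of "{1..g}" ?L "Plow N g \<alpha> v x"] inj Plow_coeffs[OF g_pos N_cases]
    by simp
  finally have "(\<Sum>i\<in>{1..g}. poly (Plow N g \<alpha> v x) (?L i) / ?den i) = I1 N g \<alpha> v x / b0 N v x" .
  with defects show ?thesis
    unfolding Ham_eq_sum_Plow_defect add_divide_distrib sum.distrib by simp
qed

lemma dHdl_eq: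
  assumes j: "j \<in> {1..g}"
  shows "dHdl N g \<alpha> v x L Z j
       = (poly (pderiv (pm_A T * pm_D T - pm_B T * pm_C T)) (L j) / Z j
          - poly (pderiv (Ppol N \<alpha> v x)) (L j)) / den j"
proof -
  define d' where "d' = poly (pderiv (pm_A T * pm_D T - pm_B T * pm_C T)) (L j) / Z j
                        - poly (pderiv (Ppol N \<alpha> v x)) (L j)"
  define q where "q = smult (b0 N v x) (\<Prod>k\<in>{1..g}-{j}. [:- L k, 1:])"
  define S where "S = - L ` ({1..g} - {j})"
  have S: "open S" "L j \<in> S"
    using j L_inj by (auto simp: S_def inj_on_eq_iff intro!: finite_imp_closed)
  have q: "poly q w = b0 N v x * (\<Prod>k\<in>{1..g}-{j}. (w - L k))" for w
    by (simp add: q_def poly_prod)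
  have "N \<ge> 1" using N_cases by auto
  then have "(spectral_defect N \<alpha> v x (Z j) has_field_derivative d') (at (L j))"
    unfolding d'_def by (rule spectral_defect_has_derivative[OF _ Z_nonzero[OF j]])
  then have "((\<lambda>w. spectral_defect N \<alpha> v x (Z j) w / poly q w) has_field_derivative d' / poly q (L j)) (at (L j))"
    by (rule DERIV_divide_vanishing[where f = "spectral_defect N \<alpha> v x (Z j)" and g = "poly q",
          OF _ poly_DERIV spectral_defect_root[OF j]])
      (use den_nonzero[OF j] in \<open>simp add: q\<close>)
  then have "((\<lambda>w. spectral_defect N \<alpha> v x (Z j) w / poly q w) has_field_derivative d' / den j) (at (L j))"
    by (simp only: q[of "L j"])
  from DERIV_add[OF DERIV_const this]
  have "((\<lambda>w. I1 N g \<alpha> v x / b0 N v x + spectral_defect N \<alpha> v x (Z j) w / poly q w)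
          has_field_derivative d' / den j) (at (L j))"
    by (simp only: add_0_left)
  moreover have "I1 N g \<alpha> v x / b0 N v x + spectral_defect N \<alpha> v x (Z j) w / poly q w
      = Ham N g \<alpha> v x (L(j := w)) Z" if "w \<in> S" for w
  proof -
    have "w \<notin> L ` ({1..g} - {j})"
      using that by (simp add: S_def)
    from Ham_move_root[OF j this] show ?thesis
      by (simp only: q)
  qed
  ultimately have "((\<lambda>w. Ham N g \<alpha> v x (L(j := w)) Z) has_field_derivative d' / den j) (at (L j))"
    by (rule has_field_derivative_transform_within_open[OF _ S])
  then show ?thesis
    unfolding dHdl_def d'_def by (rule DERIV_imp_deriv)
qed

lemma hamiltonian_field_lambda:
  assumes "j \<in> {1..g}"
  shows "Z j * dHdz N g \<alpha> v x L Z j = (Z j - poly (pm_D T) (L j)) / poly (pderiv (pm_B T)) (L j)"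
proof -
  have "Z j * dHdz N g \<alpha> v x L Z j = Z j * (1 - Qfun N \<alpha> (L j) / (Z j)^2) / den j"
    by (simp add: dHdz_eq[where Z = Z and L = L, OF assms Z_nonzero[OF assms]])
  also have "\<dots> = (Z j - Qfun N \<alpha> (L j) / Z j) / den j"
    using Z_nonzero[OF assms] by (simp add: power2_eq_square diff_divide_distrib right_diff_distrib)
  finally show ?thesis
    by (simp add: D_root[OF assms] pderiv_B_root[OF assms])
qed

lemma hamiltonian_field_z:
  assumes "j \<in> {1..g}"
  shows "- Z j * dHdl N g \<alpha> v x L Z j
       = poly (pm_C T) (L j)
         + (Z j - poly (pm_D T) (L j)) / poly (pderiv (pm_B T)) (L j) * poly (pderiv (pm_A T)) (L j)"
proof -
  let ?A' = "poly (pderiv (pm_A T)) (L j)" and ?D' = "poly (pderiv (pm_D T)) (L j)"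
    and ?C = "poly (pm_C T) (L j)" and ?D = "poly (pm_D T) (L j)"
  have Q': "poly (pderiv (pm_A T * pm_D T - pm_B T * pm_C T)) (L j) = ?A' * ?D + Z j * ?D' - den j * ?C"
    using B_root[OF assms] pderiv_B_root[OF assms] by (simp add: pderiv_mult pderiv_diff algebra_simps)
  have P': "poly (pderiv (Ppol N \<alpha> v x)) (L j) = ?A' + ?D'"
    by (simp add: Ppol_eq pderiv_add)
  show ?thesis
    unfolding dHdl_eq[OF assms] Q' P' pderiv_B_root[OF assms]
    using Z_nonzero[OF assms] den_nonzero[OF assms] by (simp add: field_simps)
qed

end

section \<open>Hamilton's equations\<close>

lemma darboux_coordinates_motion:
  fixes \<alpha> v v' x N
  assumes v': "\<And>n. (v n has_vector_derivative v' n x) (at x)"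
    and chain: "\<And>n. v' n x + v' (Suc n) x = (v (Suc n) x)^2 - (v n x)^2 + \<alpha> n"
    and \<mu>: "isCont \<mu> x" "\<forall>\<^sub>F t in at x. poly (Bpol N \<alpha> v t) (\<mu> t) = 0" "poly (Bpol N \<alpha> v x) (\<mu> x) = 0"
    and simple: "poly (pderiv (Bpol N \<alpha> v x)) (\<mu> x) \<noteq> 0"
  defines "T \<equiv> Tprod \<alpha> v x N"
  defines "\<mu>' \<equiv> (poly (pm_A T) (\<mu> x) - poly (pm_D T) (\<mu> x)) / poly (pderiv (pm_B T)) (\<mu> x)"
  shows "(\<mu> has_vector_derivative \<mu>') (at x)"
    and "((\<lambda>t. poly (Apol N \<alpha> v t) (\<mu> t)) has_vector_derivative
           poly (pm_C T) (\<mu> x) + \<mu>' * poly (pderiv (pm_A T)) (\<mu> x)) (at x)"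
proof -
  have lax: "has_pm_derivative (\<lambda>t. Tprod \<alpha> v t N)
      (pm_mult (Umat (Ucoef \<alpha> v v' x N)) T - pm_mult T (Umat (Ucoef \<alpha> v v' x 0))) x"
    unfolding T_def by (rule Tprod_lax[where v = v and v' = v' and x = x and \<alpha> = \<alpha> and n = N, OF v' chain])
  have deg: "\<forall>t. degree (pm_A (Tprod \<alpha> v t N)) \<le> N" "\<forall>t. degree (pm_B (Tprod \<alpha> v t N)) \<le> N"
    using degree_Tprod_entries by blast+
  have "has_poly_derivative (\<lambda>t. pm_B (Tprod \<alpha> v t N)) (pm_D T - pm_A T) x"
    using lax by (simp add: has_pm_derivative_def)
  from simple_root_has_vector_derivative[OF this deg(2) \<mu>[unfolded Bpol_eq]] simple
  show \<mu>': "(\<mu> has_vector_derivative \<mu>') (at x)"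
    by (simp add: \<mu>'_def T_def Bpol_eq minus_divide_left)
  have "has_poly_derivative (\<lambda>t. pm_A (Tprod \<alpha> v t N)) (pm_C T - pm_B T * [:Ucoef \<alpha> v v' x 0, 1:]) x"
    using lax by (simp add: has_pm_derivative_def)
  from poly_family_has_vector_derivative[OF this deg(1) \<mu>'] \<mu>(3)
  show "((\<lambda>t. poly (Apol N \<alpha> v t) (\<mu> t)) has_vector_derivative
           poly (pm_C T) (\<mu> x) + \<mu>' * poly (pderiv (pm_A T)) (\<mu> x)) (at x)"
    by (simp add: T_def Apol_eq Bpol_eq)
qed

theorem mainTheorem2:
  fixes N g :: nat and \<alpha> :: "nat \<Rightarrow> complex"
    and v v' :: "nat \<Rightarrow> real \<Rightarrow> complex"
    and I :: "real set"
    and lam :: "nat \<Rightarrow> real \<Rightarrow> complex"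
  assumes g_pos: "g \<ge> 1"
    and N_def: "N = 2 * g + 1 \<or> N = 2 * g + 2"
    and \<alpha>_per: "\<forall>n. \<alpha> (n + N) = \<alpha> n"
    and v_per: "\<forall>n. v (n + N) = v n"
    and I_open: "open I"
    and v_deriv: "\<forall>n. \<forall>x\<in>I. (v n has_vector_derivative v' n x) (at x)"
    and chain: "\<forall>n. \<forall>x\<in>I. v' n x + v' (Suc n) x
                   = (v (Suc n) x)^2 - (v n x)^2 + \<alpha> n"
    and lam_cont: "\<forall>j\<in>{1..g}. continuous_on I (lam j)"
    and B_nz: "\<forall>x\<in>I. Bpol N \<alpha> v x \<noteq> 0"
    and lam_zero: "\<forall>x\<in>I. \<forall>j\<in>{1..g}. poly (Bpol N \<alpha> v x) (lam j x) = 0"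
    and lam_dist: "\<forall>x\<in>I. \<forall>j\<in>{1..g}. \<forall>k\<in>{1..g}. j \<noteq> k \<longrightarrow> lam j x \<noteq> lam k x"
    and z_nz: "\<forall>x\<in>I. \<forall>j\<in>{1..g}. poly (Apol N \<alpha> v x) (lam j x) \<noteq> 0"
  shows "\<forall>x\<in>I.
     Ham N g \<alpha> v x (\<lambda>j. lam j x) (\<lambda>j. poly (Apol N \<alpha> v x) (lam j x))
        = I1 N g \<alpha> v x / b0 N v x
   \<and> (\<forall>j\<in>{1..g}.
        (lam j has_vector_derivative
           (poly (Apol N \<alpha> v x) (lam j x)
            * dHdz N g \<alpha> v x (\<lambda>k. lam k x) (\<lambda>k. poly (Apol N \<alpha> v x) (lam k x)) j)) (at x)
      \<and> ((\<lambda>t. poly (Apol N \<alpha> v t) (lam j t)) has_vector_derivative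
           (- poly (Apol N \<alpha> v x) (lam j x)
            * dHdl N g \<alpha> v x (\<lambda>k. lam k x) (\<lambda>k. poly (Apol N \<alpha> v x) (lam k x)) j)) (at x))"
proof (intro ballI, goal_cases)
  case (1 x)
  then have x: "x \<in> I" .
  have "inj_on (\<lambda>j. lam j x) {1..g}"
    using lam_dist x by (intro inj_onI) blast
  then interpret darboux_point N g \<alpha> v x "\<lambda>j. lam j x"
    using g_pos N_def B_nz lam_zero z_nz x by unfold_locales auto
  have near: "\<forall>\<^sub>F t in at x. t \<in> I"
    by (rule eventually_at_in_open'[OF I_open x])
  have "(lam j has_vector_derivative Z j * dHdz N g \<alpha> v x (\<lambda>k. lam k x) Z j) (at x)
      \<and> ((\<lambda>t. poly (Apol N \<alpha> v t) (lam j t)) has_vector_derivative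
           - Z j * dHdl N g \<alpha> v x (\<lambda>k. lam k x) Z j) (at x)" if j: "j \<in> {1..g}" for j
  proof -
    have "isCont (lam j) x"
      using lam_cont j I_open x by (simp add: continuous_on_eq_continuous_at)
    moreover have "\<forall>\<^sub>F t in at x. poly (Bpol N \<alpha> v t) (lam j t) = 0"
      using near by eventually_elim (use lam_zero j in blast)
    ultimately show ?thesis
      using darboux_coordinates_motion[of v v' x \<alpha> "lam j" N] v_deriv chain x j
        lam_zero pderiv_B_root[OF j] den_nonzero[OF j] hamiltonian_field_lambda[OF j] hamiltonian_field_z[OF j]
      by (simp add: Bpol_eq)
  qed
  then show ?case
    using Ham_eq_I1 by (simp add: Apol_eq)
qed

end
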